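(* Let $S$ be an AG-groupoid with a left identity, let $T$ be a left ideal of $S$ and let $B$ be a bi-ideal of $S$. Then $BT$ and $T^{2}B$ are bi-ideals of $S$.
   Context: An AG-groupoid (Abel-Grassmann's groupoid) is a set $S$ with a binary operation (written as juxtaposition) satisfying the left invertive law $(ab)c=(cb)a$ for all $a,b,c\in S$. A left identity is an element $e\in S$ with $ea=a$ for all $a\in S$. For nonempty subsets $A,B\subseteq S$, $AB=\{ab: a\in A, b\in B\}$ and $A^{2}=AA$. A left ideal is a nonempty subset $I$ with $SI\subseteq I$. A bi-ideal of $S$ is a nonempty subset $B$ with $BB\subseteq B$ (i.e. a sub-AG-groupoid) and $(BS)B\subseteq B$. *)

theory Defs
  imports Main
begin

definition AG_groupoid :: "'a set \<Rightarrow> ('a \<Rightarrow> 'a \<Rightarrow> 'a) \<Rightarrow> bool" where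
  "AG_groupoid S m \<longleftrightarrow> (\<forall>a\<in>S. \<forall>b\<in>S. m a b \<in> S) \<and>
     (\<forall>a\<in>S. \<forall>b\<in>S. \<forall>c\<in>S. m (m a b) c = m (m c b) a)"

definition left_identity :: "'a set \<Rightarrow> ('a \<Rightarrow> 'a \<Rightarrow> 'a) \<Rightarrow> 'a \<Rightarrow> bool" where
  "left_identity S m e \<longleftrightarrow> e \<in> S \<and> (\<forall>a\<in>S. m e a = a)"

definition setmult :: "('a \<Rightarrow> 'a \<Rightarrow> 'a) \<Rightarrow> 'a set \<Rightarrow> 'a set \<Rightarrow> 'a set" where
  "setmult m A B = {m a b | a b. a \<in> A \<and> b \<in> B}"

definition left_ideal :: "'a set \<Rightarrow> ('a \<Rightarrow> 'a \<Rightarrow> 'a) \<Rightarrow> 'a set \<Rightarrow> bool" where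
  "left_ideal S m I \<longleftrightarrow> I \<subseteq> S \<and> I \<noteq> {} \<and> setmult m S I \<subseteq> I"

definition bi_ideal :: "'a set \<Rightarrow> ('a \<Rightarrow> 'a \<Rightarrow> 'a) \<Rightarrow> 'a set \<Rightarrow> bool" where
  "bi_ideal S m B \<longleftrightarrow> B \<subseteq> S \<and> B \<noteq> {} \<and> setmult m B B \<subseteq> B \<and>
     setmult m (setmult m B S) B \<subseteq> B"

end

theory Submission
  imports Defs
begin

(* Every AG-groupoid is medial: (ab)(cd) = (ac)(bd).  Together with the left
   invertive law this already shows that BT is a bi-ideal whenever B is a
   bi-ideal and T a left ideal; no identity is needed.

   With a left identity e one further gets a(bc) = b(ac) and the paramedial law
   (ab)(cd) = (db)(ca).  These give two facts:
     - the square TT of a left ideal T is again a left ideal;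
     - LB is a bi-ideal for every left ideal L and bi-ideal B.
   Applying the second fact to L = TT shows that T^2 B is a bi-ideal, and the
   theorem combines the two results. *)

lemma setmultI [intro]: "a \<in> A \<Longrightarrow> b \<in> B \<Longrightarrow> m a b \<in> setmult m A B"
  unfolding setmult_def by blast

lemma setmultE:
  assumes "x \<in> setmult m A B"
  obtains a b where "a \<in> A" "b \<in> B" "x = m a b"
  using assms unfolding setmult_def by blast

lemma setmult_subset_iff:
  "setmult m A B \<subseteq> C \<longleftrightarrow> (\<forall>a\<in>A. \<forall>b\<in>B. m a b \<in> C)"
  unfolding setmult_def by blast

lemma setmult_nonempty: "A \<noteq> {} \<Longrightarrow> B \<noteq> {} \<Longrightarrow> setmult m A B \<noteq> {}"
  unfolding setmult_def by blast

lemma left_idealD: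
  assumes "left_ideal S m L"
  shows "L \<subseteq> S" and "L \<noteq> {}" and "s \<in> S \<Longrightarrow> l \<in> L \<Longrightarrow> m s l \<in> L"
  using assms unfolding left_ideal_def by auto

lemma bi_idealD:
  assumes "bi_ideal S m B"
  shows "B \<subseteq> S" and "B \<noteq> {}" and "a \<in> B \<Longrightarrow> b \<in> B \<Longrightarrow> m a b \<in> B"
    and "a \<in> B \<Longrightarrow> s \<in> S \<Longrightarrow> b \<in> B \<Longrightarrow> m (m a s) b \<in> B"
proof -
  show "B \<subseteq> S" "B \<noteq> {}" using assms unfolding bi_ideal_def by blast+
  show "a \<in> B \<Longrightarrow> b \<in> B \<Longrightarrow> m a b \<in> B"
    using assms unfolding bi_ideal_def setmult_subset_iff by blast
  show "m (m a s) b \<in> B" if "a \<in> B" "s \<in> S" "b \<in> B"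
  proof -
    have "m a s \<in> setmult m B S" using that by blast
    then show ?thesis using assms that unfolding bi_ideal_def setmult_subset_iff by blast
  qed
qed

locale ag =
  fixes S :: "'a set" and m :: "'a \<Rightarrow> 'a \<Rightarrow> 'a"
  assumes AG: "AG_groupoid S m"
begin

lemma closed: "a \<in> S \<Longrightarrow> b \<in> S \<Longrightarrow> m a b \<in> S"
  using AG unfolding AG_groupoid_def by blast

lemma left_invertive:
  "a \<in> S \<Longrightarrow> b \<in> S \<Longrightarrow> c \<in> S \<Longrightarrow> m (m a b) c = m (m c b) a"
  using AG unfolding AG_groupoid_def by blast

lemma medial:
  assumes "a \<in> S" "b \<in> S" "c \<in> S" "d \<in> S"
  shows "m (m a b) (m c d) = m (m a c) (m b d)"
proof -
  have "m (m a b) (m c d) = m (m (m c d) b) a" using assms closed left_invertive by blast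
  also have "\<dots> = m (m (m b d) c) a" using assms left_invertive by simp
  also have "\<dots> = m (m a c) (m b d)" using assms closed left_invertive by simp
  finally show ?thesis .
qed

lemma setmult_subset_carrier: "A \<subseteq> S \<Longrightarrow> B \<subseteq> S \<Longrightarrow> setmult m A B \<subseteq> S"
  unfolding setmult_subset_iff using closed by blast

lemma bi_ideal_times_left_ideal:
  assumes T: "left_ideal S m T" and B: "bi_ideal S m B"
  shows "bi_ideal S m (setmult m B T)"
proof -
  note TS = left_idealD(1)[OF T] and Tne = left_idealD(2)[OF T]
    and TL = left_idealD(3)[OF T]
  note BS = bi_idealD(1)[OF B] and Bne = bi_idealD(2)[OF B]
    and BB = bi_idealD(3)[OF B] and BSB = bi_idealD(4)[OF B]
  have sub: "setmult m (setmult m B T) (setmult m B T) \<subseteq> setmult m B T"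
  proof (clarsimp simp: setmult_subset_iff elim!: setmultE)
    fix b1 t1 b2 t2 assume h: "b1 \<in> B" "t1 \<in> T" "b2 \<in> B" "t2 \<in> T"
    have "m (m b1 t1) (m b2 t2) = m (m b1 b2) (m t1 t2)"
      using h BS TS by (intro medial) auto
    moreover have "m b1 b2 \<in> B" "m t1 t2 \<in> T" using h BB TL TS by auto
    ultimately show "m (m b1 t1) (m b2 t2) \<in> setmult m B T" by auto
  qed
  have bi: "setmult m (setmult m (setmult m B T) S) (setmult m B T) \<subseteq> setmult m B T"
  proof (clarsimp simp: setmult_subset_iff elim!: setmultE)
    fix b1 t1 s b2 t2 assume h: "b1 \<in> B" "t1 \<in> T" "s \<in> S" "b2 \<in> B" "t2 \<in> T"
    have "m (m (m b1 t1) s) (m b2 t2) = m (m (m b1 t1) b2) (m s t2)"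
      using h BS TS closed by (intro medial) auto
    also have "\<dots> = m (m (m b2 t1) b1) (m s t2)"
      using h BS TS by (subst left_invertive) auto
    finally have "m (m (m b1 t1) s) (m b2 t2) = m (m (m b2 t1) b1) (m s t2)" .
    moreover have "m (m b2 t1) b1 \<in> B" "m s t2 \<in> T" using h BSB TL TS by auto
    ultimately show "m (m (m b1 t1) s) (m b2 t2) \<in> setmult m B T" by auto
  qed
  show ?thesis unfolding bi_ideal_def
    using setmult_subset_carrier[OF BS TS] setmult_nonempty[OF Bne Tne] sub bi by blast
qed

end

locale ag_left_id = ag +
  fixes e :: 'a
  assumes left_id: "left_identity S m e"
begin

lemma e_in: "e \<in> S" and e_left: "a \<in> S \<Longrightarrow> m e a = a"
  using left_id unfolding left_identity_def by blast+

(* Inserting e on the left and applying the medial law swaps outer factors. *)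
lemma left_permute:
  assumes "a \<in> S" "b \<in> S" "c \<in> S"
  shows "m a (m b c) = m b (m a c)"
proof -
  have "m a (m b c) = m (m e a) (m b c)" using assms e_left by simp
  also have "\<dots> = m (m e b) (m a c)" using assms e_in medial by blast
  also have "\<dots> = m b (m a c)" using assms e_left by simp
  finally show ?thesis .
qed

lemma paramedial:
  assumes "a \<in> S" "b \<in> S" "c \<in> S" "d \<in> S"
  shows "m (m a b) (m c d) = m (m d b) (m c a)"
proof -
  have "m (m a b) (m c d) = m c (m (m a b) d)" using assms closed left_permute by simp
  also have "\<dots> = m c (m (m d b) a)" using assms left_invertive by simp
  also have "\<dots> = m (m d b) (m c a)" using assms closed left_permute by simp
  finally show ?thesis .
qed

(* The square of a left ideal is a left ideal: s(t1 t2) = t1(s t2). *)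
lemma left_ideal_square:
  assumes T: "left_ideal S m T"
  shows "left_ideal S m (setmult m T T)"
proof -
  note TS = left_idealD(1)[OF T] and Tne = left_idealD(2)[OF T]
    and TL = left_idealD(3)[OF T]
  have closed_left: "setmult m S (setmult m T T) \<subseteq> setmult m T T"
  proof (clarsimp simp: setmult_subset_iff elim!: setmultE)
    fix s t1 t2 assume h: "s \<in> S" "t1 \<in> T" "t2 \<in> T"
    have "m s (m t1 t2) = m t1 (m s t2)" using h TS left_permute by blast
    moreover have "m s t2 \<in> T" using h by (intro TL)
    ultimately show "m s (m t1 t2) \<in> setmult m T T" using h(2) by (metis setmultI)
  qed
  show ?thesis unfolding left_ideal_def
    using setmult_subset_carrier[OF TS TS] setmult_nonempty[OF Tne Tne] closed_left by blast
qed

(* Key computation for LB: ((l1 b1) s)(l2 b2) = ((l2 e) l1) ((b2 s) b1), so a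
   typical element of (LB S)(LB) is a left-ideal element times an element of BSB. *)
lemma bi_ideal_rearrange:
  assumes "l1 \<in> S" "b1 \<in> S" "s \<in> S" "l2 \<in> S" "b2 \<in> S"
  shows "m (m (m l1 b1) s) (m l2 b2) = m (m (m l2 e) l1) (m (m b2 s) b1)"
proof -
  define c where "c = m (m b2 s) b1"
  have cS: "c \<in> S" using assms closed unfolding c_def by simp
  have "m (m (m l1 b1) s) b2 = m (m b2 s) (m l1 b1)"
    using assms closed left_invertive by simp
  also have "\<dots> = m l1 c" using assms closed left_permute unfolding c_def by simp
  finally have inner: "m (m (m l1 b1) s) b2 = m l1 c" .
  have "m (m (m l1 b1) s) (m l2 b2) = m l2 (m l1 c)"
    using assms closed left_permute inner by metis
  also have "\<dots> = m (m e l2) (m l1 c)" using assms e_left by simp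
  also have "\<dots> = m (m c l2) (m l1 e)" using assms cS e_in paramedial by blast
  also have "\<dots> = m (m (m l1 e) l2) c" using assms cS e_in closed left_invertive by simp
  also have "\<dots> = m (m (m l2 e) l1) c"
    using assms e_in left_invertive by simp
  finally show ?thesis unfolding c_def .
qed

lemma left_ideal_times_bi_ideal:
  assumes L: "left_ideal S m L" and B: "bi_ideal S m B"
  shows "bi_ideal S m (setmult m L B)"
proof -
  note LS = left_idealD(1)[OF L] and Lne = left_idealD(2)[OF L]
    and LL = left_idealD(3)[OF L]
  note BS = bi_idealD(1)[OF B] and Bne = bi_idealD(2)[OF B]
    and BB = bi_idealD(3)[OF B] and BSB = bi_idealD(4)[OF B]
  have sub: "setmult m (setmult m L B) (setmult m L B) \<subseteq> setmult m L B"
  proof (clarsimp simp: setmult_subset_iff elim!: setmultE)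
    fix l1 b1 l2 b2 assume h: "l1 \<in> L" "b1 \<in> B" "l2 \<in> L" "b2 \<in> B"
    have "m (m l1 b1) (m l2 b2) = m (m l1 l2) (m b1 b2)"
      using h BS LS by (intro medial) auto
    moreover have "m l1 l2 \<in> L" "m b1 b2 \<in> B" using h BB LL LS by auto
    ultimately show "m (m l1 b1) (m l2 b2) \<in> setmult m L B" by auto
  qed
  have bi: "setmult m (setmult m (setmult m L B) S) (setmult m L B) \<subseteq> setmult m L B"
  proof (clarsimp simp: setmult_subset_iff elim!: setmultE)
    fix l1 b1 s l2 b2 assume h: "l1 \<in> L" "b1 \<in> B" "s \<in> S" "l2 \<in> L" "b2 \<in> B"
    have eq: "m (m (m l1 b1) s) (m l2 b2) = m (m (m l2 e) l1) (m (m b2 s) b1)"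
      using h LS BS by (intro bi_ideal_rearrange) auto
    have "m l2 e \<in> S" using h(4) LS e_in closed by blast
    then have "m (m l2 e) l1 \<in> L" using h(1) by (rule LL)
    moreover have "m (m b2 s) b1 \<in> B" using h(5,3,2) by (rule BSB)
    ultimately show "m (m (m l1 b1) s) (m l2 b2) \<in> setmult m L B"
      unfolding eq by (rule setmultI)
  qed
  show ?thesis unfolding bi_ideal_def
    using setmult_subset_carrier[OF LS BS] setmult_nonempty[OF Lne Bne] sub bi by blast
qed

end

theorem proposition1:
  fixes S :: "'a set" and m :: "'a \<Rightarrow> 'a \<Rightarrow> 'a" and T B :: "'a set"
  assumes "AG_groupoid S m"
    and "\<exists>e. left_identity S m e"
    and "left_ideal S m T"
    and "bi_ideal S m B"
  shows "bi_ideal S m (setmult m B T) \<and>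
         bi_ideal S m (setmult m (setmult m T T) B)"
proof -
  obtain e where e: "left_identity S m e" using assms(2) by blast
  interpret ag_left_id S m e using assms(1) e by unfold_locales
  have "bi_ideal S m (setmult m B T)"
    using assms(3,4) by (rule bi_ideal_times_left_ideal)
  moreover have "left_ideal S m (setmult m T T)"
    using assms(3) by (rule left_ideal_square)
  then have "bi_ideal S m (setmult m (setmult m T T) B)"
    using assms(4) by (rule left_ideal_times_bi_ideal)
  ultimately show ?thesis ..
qed

end
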